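(* Suppose the p-values are conditionally super-uniform: for every $t$ with $\theta_t=0$, $\mathbb{P}(p_t\le u\mid\mathcal{F}_{t-1})\le u$ a.s. for all $u\in[0,1]$ (equivalently, for every $\mathcal F_{t-1}$-measurable $[0,1]$-valued $U$, $\mathbb{P}(p_t\le U\mid\mathcal{F}_{t-1})\le U$). Let $\mathrm{FDP}^*_{\mathrm{e}}(t)=\sum_{j\in\mathcal{H}_0(t)}\frac{\alpha_j}{R_{j-1}+1}$. Then for every $t\ge1$: if $\mathbb{E}[\mathrm{FDP}^*_{\mathrm{e}}(t)]\le\alpha$, then $\mathrm{FDR}(t)\le\alpha$.
   Context: Let $\alpha\in(0,1)$ be a target level. Hypotheses are indexed by $t=1,2,\dots$; $\theta_t\in\{0,1\}$ is a fixed (non-random) indicator with $\theta_t=0$ iff the $t$-th null hypothesis is true. $p_1,p_2,\dots$ are $[0,1]$-valued random variables (p-values). Testing levels $\alpha_1,\alpha_2,\dots$ are $[0,1]$-valued random variables and the decisions are $\delta_t=\mathbb{1}\{p_t\le\alpha_t\}$. Let $\mathcal{F}_t=\sigma(\delta_1,\dots,\delta_t)$, $\mathcal{F}_0$ trivial; each $\alpha_t$ is required to be $\mathcal{F}_{t-1}$-measurable. $R_t=\sum_{j=1}^t\delta_j$, $R_0=0$. $\mathcal{H}_0(t)=\{j\le t:\theta_j=0\}$. $\mathrm{FDR}(t)=\mathbb{E}\big[\sum_{j\in\mathcal{H}_0(t)}\delta_j/(R_t\vee 1)\big]$. *)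

theory Defs
  imports "HOL-Probability.Probability"
begin

(* Decision delta_t = 1{p_t <= alpha_t}. Hypotheses are indexed from 1. *)
definition delta :: "(nat \<Rightarrow> 'a \<Rightarrow> real) \<Rightarrow> (nat \<Rightarrow> 'a \<Rightarrow> real) \<Rightarrow> nat \<Rightarrow> 'a \<Rightarrow> real" where
  "delta p alpha t \<omega> = (if p t \<omega> \<le> alpha t \<omega> then 1 else 0)"

definition rej :: "(nat \<Rightarrow> 'a \<Rightarrow> real) \<Rightarrow> (nat \<Rightarrow> 'a \<Rightarrow> real) \<Rightarrow> nat \<Rightarrow> 'a \<Rightarrow> real" where
  "rej p alpha t \<omega> = (\<Sum>j\<in>{1..t}. delta p alpha j \<omega>)"

definition filt :: "'a measure \<Rightarrow> (nat \<Rightarrow> 'a \<Rightarrow> real) \<Rightarrow> (nat \<Rightarrow> 'a \<Rightarrow> real) \<Rightarrow> nat \<Rightarrow> 'a measure" where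
  "filt M p alpha t = sigma (space M)
     (\<Union>j\<in>{1..t}. {delta p alpha j -` B \<inter> space M | B. B \<in> sets borel})"

definition H0 :: "(nat \<Rightarrow> nat) \<Rightarrow> nat \<Rightarrow> nat set" where
  "H0 theta t = {j \<in> {1..t}. theta j = 0}"

definition FDR :: "'a measure \<Rightarrow> (nat \<Rightarrow> 'a \<Rightarrow> real) \<Rightarrow> (nat \<Rightarrow> 'a \<Rightarrow> real) \<Rightarrow> (nat \<Rightarrow> nat) \<Rightarrow> nat \<Rightarrow> real" where
  "FDR M p alpha theta t =
     (\<integral>\<omega>. (\<Sum>j\<in>H0 theta t. delta p alpha j \<omega>) / max (rej p alpha t \<omega>) 1 \<partial>M)"

definition FDP_star_e :: "(nat \<Rightarrow> 'a \<Rightarrow> real) \<Rightarrow> (nat \<Rightarrow> 'a \<Rightarrow> real) \<Rightarrow> (nat \<Rightarrow> nat) \<Rightarrow> nat \<Rightarrow> 'a \<Rightarrow> real" where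
  "FDP_star_e p alpha theta t \<omega> =
     (\<Sum>j\<in>H0 theta t. alpha j \<omega> / (rej p alpha (j - 1) \<omega> + 1))"

end

theory Submission
  imports Defs
begin

(* If the j-th hypothesis is rejected then R_t >= R_{j-1} + 1, so
   FDR(t) <= sum over null j of E[delta_j / (R_{j-1} + 1)].  The level alpha_j and the
   weight 1 / (R_{j-1} + 1) are F_{j-1}-measurable, and F_{j-1} is generated by finitely
   many {0,1}-valued decisions, so both take only finitely many values.  Splitting along
   the level sets of alpha_j and applying conditional super-uniformity at each constant
   level gives E[delta_j / (R_{j-1} + 1)] <= E[alpha_j / (R_{j-1} + 1)]; summing over the
   null indices yields FDR(t) <= E[FDP*_e(t)]. *)
context sigma_finite_subalgebra
begin

lemma integral_mult_indicator_le_of_real_cond_exp_le: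
  fixes f :: "'a \<Rightarrow> real"
  assumes f_F [measurable]: "f \<in> borel_measurable F"
    and f_nonneg: "\<And>x. x \<in> space M \<Longrightarrow> 0 \<le> f x"
    and f_int: "integrable M f"
    and X [measurable]: "X \<in> sets M"
    and ce_le: "AE x in M. real_cond_exp M F (indicator X) x \<le> u"
  shows "(\<integral>x. f x * indicator X x \<partial>M) \<le> u * (\<integral>x. f x \<partial>M)"
proof -
  have "integrable M (\<lambda>x. f x * indicator X x)"
    using integrable_mult_indicator[OF X f_int] by (simp add: mult.commute)
  note ce = real_cond_exp_intg[OF this f_F]
  have "(\<integral>x. f x * indicator X x \<partial>M) = (\<integral>x. f x * real_cond_exp M F (indicator X) x \<partial>M)"
    using ce(2) by simp
  also have "\<dots> \<le> (\<integral>x. f x * u \<partial>M)"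
    using ce(1) f_int
  proof (intro integral_mono_AE)
    show "AE x in M. f x * real_cond_exp M F (indicator X) x \<le> f x * u"
      using ce_le AE_space by eventually_elim (simp add: f_nonneg mult_left_mono)
  qed simp_all
  finally show ?thesis by (simp add: mult.commute)
qed

lemma integral_mult_indicator_le_at_measurable_level:
  fixes U W p :: "'a \<Rightarrow> real"
  assumes U_F [measurable]: "U \<in> borel_measurable F" and U_finite: "finite (U ` space M)"
    and W_F [measurable]: "W \<in> borel_measurable F"
    and W_nonneg: "\<And>x. x \<in> space M \<Longrightarrow> 0 \<le> W x" and W_int: "integrable M W"
    and p [measurable]: "p \<in> borel_measurable M"
    and super_uniform: "\<And>u. u \<in> U ` space M \<Longrightarrow>
          AE x in M. real_cond_exp M F (indicator {x \<in> space M. p x \<le> u}) x \<le> u"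
  shows "(\<integral>x. W x * indicator {x \<in> space M. p x \<le> U x} x \<partial>M) \<le> (\<integral>x. W x * U x \<partial>M)"
proof -
  have space_F: "space F = space M"
    using subalg by (simp add: subalgebra_def)
  have [measurable]: "U \<in> borel_measurable M" "W \<in> borel_measurable M"
    using measurable_from_subalg[OF subalg U_F] measurable_from_subalg[OF subalg W_F] .
  define L where "L u = {x \<in> space M. U x = u}" for u
  define X where "X u = {x \<in> space M. p x \<le> u}" for u
  define f where "f u x = W x * indicator (L u) x" for u x
  have L_F: "L u \<in> sets F" for u
    unfolding L_def space_F[symmetric] by measurable
  have L_M: "L u \<in> sets M" for u
    using L_F subalg by (auto simp: subalgebra_def)
  have f_F: "f u \<in> borel_measurable F" for u
    unfolding f_def using L_F by measurable
  have f_int: "integrable M (f u)" for u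
    unfolding f_def
    using integrable_mult_indicator[OF L_M W_int]
    by (simp add: mult.commute)
  have f_indicator_int: "integrable M (\<lambda>x. f u x * indicator (X u) x)" for u
    using integrable_mult_indicator[OF _ f_int, of "X u"] by (simp add: X_def mult.commute)
  have split_left: "W x * indicator {x \<in> space M. p x \<le> U x} x
      = (\<Sum>u\<in>U ` space M. f u x * indicator (X u) x)" if "x \<in> space M" for x
  proof -
    have "(\<Sum>u\<in>U ` space M. f u x * indicator (X u) x)
        = (\<Sum>u\<in>U ` space M. if u = U x then W x * indicator (X (U x)) x else 0)"
      using that by (intro sum.cong) (auto simp: f_def L_def)
    also have "\<dots> = W x * indicator {x \<in> space M. p x \<le> U x} x"
      using that U_finite by (simp add: X_def indicator_def)
    finally show ?thesis by simp
  qed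
  have split_right: "W x * U x = (\<Sum>u\<in>U ` space M. u * f u x)" if "x \<in> space M" for x
  proof -
    have "(\<Sum>u\<in>U ` space M. u * f u x) = (\<Sum>u\<in>U ` space M. if u = U x then U x * W x else 0)"
      using that by (intro sum.cong) (auto simp: f_def L_def)
    then show ?thesis
      using that U_finite by simp
  qed
  have "(\<integral>x. W x * indicator {x \<in> space M. p x \<le> U x} x \<partial>M)
      = (\<Sum>u\<in>U ` space M. \<integral>x. f u x * indicator (X u) x \<partial>M)"
    by (simp add: split_left f_indicator_int cong: Bochner_Integration.integral_cong)
  also have "\<dots> \<le> (\<Sum>u\<in>U ` space M. u * (\<integral>x. f u x \<partial>M))"
  proof (rule sum_mono)
    fix u assume "u \<in> U ` space M"
    then show "(\<integral>x. f u x * indicator (X u) x \<partial>M) \<le> u * (\<integral>x. f u x \<partial>M)"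
      using integral_mult_indicator_le_of_real_cond_exp_le[OF f_F _ f_int _ super_uniform]
      by (simp add: X_def f_def W_nonneg)
  qed
  also have "\<dots> = (\<integral>x. W x * U x \<partial>M)"
    by (simp add: split_right f_int cong: Bochner_Integration.integral_cong)
  finally show ?thesis .
qed

end

lemma (in finite_measure) integrable_unit_div:
  fixes f g :: "'a \<Rightarrow> real"
  assumes [measurable]: "f \<in> borel_measurable M" "g \<in> borel_measurable M"
    and "\<And>w. w \<in> space M \<Longrightarrow> f w \<in> {0..1}" "\<And>w. w \<in> space M \<Longrightarrow> 1 \<le> g w"
  shows "integrable M (\<lambda>w. f w / g w)"
proof (rule integrable_const_bound[where B = 1])
  show "AE w in M. norm (f w / g w) \<le> 1"
  proof (rule AE_I2)
    fix w assume "w \<in> space M"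
    then have "0 \<le> f w" "f w \<le> 1" "1 \<le> g w"
      using assms(3,4) by auto
    then show "norm (f w / g w) \<le> 1"
      by simp
  qed
qed measurable

lemma delta_cases: "delta p alpha s w = 0 \<or> delta p alpha s w = 1"
  unfolding delta_def by auto

lemma delta_eq_indicator:
  "w \<in> space M \<Longrightarrow> delta p alpha s w = indicator {w \<in> space M. p s w \<le> alpha s w} w"
  unfolding delta_def by (simp add: indicator_def)

lemma measurable_delta [measurable]:
  assumes [measurable]: "p s \<in> borel_measurable M" "alpha s \<in> borel_measurable M"
  shows "delta p alpha s \<in> borel_measurable M"
  unfolding delta_def[abs_def] by measurable

lemma rej_Suc: "rej p alpha (Suc n) w = rej p alpha n w + delta p alpha (Suc n) w"
  unfolding rej_def by simp

lemma rej_nonneg: "0 \<le> rej p alpha n w"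
  unfolding rej_def by (rule sum_nonneg) (auto simp: delta_def)

lemma rej_mono: "n \<le> m \<Longrightarrow> rej p alpha n w \<le> rej p alpha m w"
  unfolding rej_def by (rule sum_mono2) (auto simp: delta_def)

lemma measurable_rej:
  assumes "\<And>s. p s \<in> borel_measurable M" "\<And>s. alpha s \<in> borel_measurable M"
  shows "rej p alpha n \<in> borel_measurable M"
  unfolding rej_def[abs_def] using assms by measurable

lemma space_filt [simp]: "space (filt M p alpha n) = space M"
  unfolding filt_def by (rule space_measure_of) auto

lemma sets_filt: "sets (filt M p alpha n) = sigma_sets (space M)
    (\<Union>j\<in>{1..n}. {delta p alpha j -` B \<inter> space M | B. B \<in> sets borel})"
  unfolding filt_def by (rule sets_measure_of) auto

lemma measurable_delta_filt:
  assumes "i \<in> {1..n}"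
  shows "delta p alpha i \<in> borel_measurable (filt M p alpha n)"
proof (rule measurableI)
  fix B :: "real set" assume "B \<in> sets borel"
  then have "delta p alpha i -` B \<inter> space M
      \<in> (\<Union>j\<in>{1..n}. {delta p alpha j -` B \<inter> space M | B. B \<in> sets borel})"
    using assms by blast
  then show "delta p alpha i -` B \<inter> space (filt M p alpha n) \<in> sets (filt M p alpha n)"
    unfolding sets_filt space_filt by (rule sigma_sets.Basic)
qed simp

lemma measurable_rej_filt: "rej p alpha n \<in> borel_measurable (filt M p alpha n)"
  unfolding rej_def[abs_def] by (intro borel_measurable_sum measurable_delta_filt)

lemma subalgebra_filt:
  assumes "\<And>s. p s \<in> borel_measurable M" "\<And>s. alpha s \<in> borel_measurable M"
  shows "subalgebra M (filt M p alpha n)"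
  unfolding subalgebra_def sets_filt
  using measurable_delta[OF assms] by (auto intro!: sets.sigma_sets_subset measurable_sets)

lemma filt_sets_saturated:
  assumes "S \<in> sets (filt M p alpha n)" "w \<in> space M" "w' \<in> space M"
    and "\<And>i. i \<in> {1..n} \<Longrightarrow> delta p alpha i w = delta p alpha i w'"
  shows "w \<in> S \<longleftrightarrow> w' \<in> S"
  using assms(1) unfolding sets_filt
proof induction
  case (Basic S)
  then show ?case using assms(2-4) by auto
qed (use assms(2,3) in auto)

lemma filt_measurable_eq:
  fixes f :: "'a \<Rightarrow> real"
  assumes "f \<in> borel_measurable (filt M p alpha n)" "w \<in> space M" "w' \<in> space M"
    and "\<And>i. i \<in> {1..n} \<Longrightarrow> delta p alpha i w = delta p alpha i w'"
  shows "f w = f w'"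
proof -
  have "f -` {f w} \<inter> space M \<in> sets (filt M p alpha n)"
    using measurable_sets[OF assms(1), of "{f w}"] by simp
  from filt_sets_saturated[OF this assms(2-4)] assms(2,3) show ?thesis by simp
qed

lemma finite_image_filt_measurable:
  fixes f :: "'a \<Rightarrow> real"
  assumes "f \<in> borel_measurable (filt M p alpha n)"
  shows "finite (f ` space M)"
proof -
  define pattern where "pattern w = restrict (\<lambda>i. delta p alpha i w) {1..n}" for w
  define g where "g v = f (inv_into (space M) pattern v)" for v
  have "pattern ` space M \<subseteq> PiE {1..n} (\<lambda>_. {0, 1})"
    unfolding pattern_def by (auto simp: delta_def split: if_splits)
  then have pattern_finite: "finite (pattern ` space M)"
    by (rule finite_subset) (simp add: finite_PiE)
  have "f w = g (pattern w)" if w: "w \<in> space M" for w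
  proof -
    have same_pattern: "pattern (inv_into (space M) pattern (pattern w)) = pattern w"
      using w by (simp add: f_inv_into_f)
    show ?thesis
      unfolding g_def
    proof (rule filt_measurable_eq[OF assms w])
      show "inv_into (space M) pattern (pattern w) \<in> space M"
        using w by (simp add: inv_into_into)
      fix i assume "i \<in> {1..n}"
      then show "delta p alpha i w = delta p alpha i (inv_into (space M) pattern (pattern w))"
        using fun_cong[OF same_pattern, of i] by (simp add: pattern_def)
    qed
  qed
  then have "f ` space M = g ` pattern ` space M"
    by (simp add: image_image cong: image_cong)
  then show ?thesis
    using pattern_finite by simp
qed

lemma delta_div_max_rej_le:
  assumes "1 \<le> j" "j \<le> t"
  shows "delta p alpha j w / max (rej p alpha t w) 1
    \<le> delta p alpha j w / (rej p alpha (j - 1) w + 1)"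
proof (cases "delta p alpha j w = 0")
  case False
  then have rejected: "delta p alpha j w = 1"
    using delta_cases[of p alpha j w] by simp
  have "rej p alpha j w = rej p alpha (j - 1) w + 1"
    using rej_Suc[of p alpha "j - 1" w] assms(1) rejected by simp
  moreover have "rej p alpha j w \<le> rej p alpha t w"
    using assms(2) by (rule rej_mono)
  ultimately have "rej p alpha (j - 1) w + 1 \<le> max (rej p alpha t w) 1"
    by linarith
  then show ?thesis
    using rejected rej_nonneg[of p alpha "j - 1" w] by (simp add: frac_le)
qed simp

lemma FDR_le_sum_integral_delta_div_rej:
  assumes "finite_measure M"
    and [measurable]: "\<And>s. p s \<in> borel_measurable M" "\<And>s. alpha s \<in> borel_measurable M"
  shows "FDR M p alpha theta t
    \<le> (\<Sum>j\<in>H0 theta t. \<integral>w. delta p alpha j w / (rej p alpha (j - 1) w + 1) \<partial>M)"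
proof -
  interpret finite_measure M by fact
  note [measurable] = measurable_rej[OF assms(2,3)]
  have "FDR M p alpha theta t
      = (\<Sum>j\<in>H0 theta t. \<integral>w. delta p alpha j w / max (rej p alpha t w) 1 \<partial>M)"
    unfolding FDR_def sum_divide_distrib
    by (intro Bochner_Integration.integral_sum integrable_unit_div) (auto simp: delta_def)
  also have "\<dots> \<le> (\<Sum>j\<in>H0 theta t. \<integral>w. delta p alpha j w / (rej p alpha (j - 1) w + 1) \<partial>M)"
  proof (intro sum_mono integral_mono integrable_unit_div)
    fix j w assume "j \<in> H0 theta t"
    then show "delta p alpha j w / max (rej p alpha t w) 1
        \<le> delta p alpha j w / (rej p alpha (j - 1) w + 1)"
      by (intro delta_div_max_rej_le) (auto simp: H0_def)
  qed (auto simp: delta_def rej_nonneg)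
  finally show ?thesis .
qed

lemma integral_FDP_star_e:
  assumes "finite_measure M"
    and [measurable]: "\<And>s. p s \<in> borel_measurable M" "\<And>s. alpha s \<in> borel_measurable M"
    and "\<And>s w. w \<in> space M \<Longrightarrow> alpha s w \<in> {0..1}"
  shows "(\<integral>w. FDP_star_e p alpha theta t w \<partial>M)
    = (\<Sum>j\<in>H0 theta t. \<integral>w. alpha j w / (rej p alpha (j - 1) w + 1) \<partial>M)"
proof -
  interpret finite_measure M by fact
  note [measurable] = measurable_rej[OF assms(2,3)]
  show ?thesis
    unfolding FDP_star_e_def
    using assms(4)
    by (intro Bochner_Integration.integral_sum integrable_unit_div) (auto simp: rej_nonneg)
qed

lemma integral_delta_div_rej_le_integral_alpha_div_rej:
  assumes "finite_measure M"
    and p [measurable]: "\<And>s. p s \<in> borel_measurable M"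
    and alpha [measurable]: "\<And>s. alpha s \<in> borel_measurable M"
    and alpha_unit: "\<And>w. w \<in> space M \<Longrightarrow> alpha j w \<in> {0..1}"
    and alpha_predictable: "alpha j \<in> borel_measurable (filt M p alpha n)"
    and super_uniform: "\<And>u. u \<in> {0..1} \<Longrightarrow>
          AE w in M. real_cond_exp M (filt M p alpha n) (indicator {w' \<in> space M. p j w' \<le> u}) w \<le> u"
  shows "(\<integral>w. delta p alpha j w / (rej p alpha n w + 1) \<partial>M)
    \<le> (\<integral>w. alpha j w / (rej p alpha n w + 1) \<partial>M)"
proof -
  interpret finite_measure M by fact
  interpret finite_measure_subalgebra M "filt M p alpha n"
    by unfold_locales (rule subalgebra_filt[OF p alpha])
  define W where "W w = 1 / (rej p alpha n w + 1)" for w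
  have W_filt: "W \<in> borel_measurable (filt M p alpha n)"
    unfolding W_def using measurable_rej_filt by measurable
  have W_unit: "W w \<in> {0..1}" for w
    unfolding W_def using rej_nonneg[of p alpha n w] by auto
  note [measurable] = measurable_rej[OF p alpha]
  have W_int: "integrable M W"
    unfolding W_def by (rule integrable_unit_div) (auto simp: rej_nonneg)
  have "(\<integral>w. delta p alpha j w / (rej p alpha n w + 1) \<partial>M)
      = (\<integral>w. W w * indicator {w \<in> space M. p j w \<le> alpha j w} w \<partial>M)"
    by (intro Bochner_Integration.integral_cong) (simp_all add: W_def delta_eq_indicator)
  also have "\<dots> \<le> (\<integral>w. W w * alpha j w \<partial>M)"
  proof (rule integral_mult_indicator_le_at_measurable_level)
    show "finite (alpha j ` space M)"
      using alpha_predictable by (rule finite_image_filt_measurable)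
  qed (use alpha_predictable W_filt W_unit W_int alpha_unit super_uniform in auto)
  also have "\<dots> = (\<integral>w. alpha j w / (rej p alpha n w + 1) \<partial>M)"
    by (simp add: W_def)
  finally show ?thesis .
qed

theorem theorem3:
  fixes M :: "'a measure"
    and p alpha :: "nat \<Rightarrow> 'a \<Rightarrow> real"
    and theta :: "nat \<Rightarrow> nat"
    and \<alpha> :: real
    and t :: nat
  assumes "prob_space M"
    and "0 < \<alpha>" and "\<alpha> < 1"
    and "\<And>s. theta s \<in> {0, 1}"
    and "\<And>s. p s \<in> borel_measurable M"
    and "\<And>s \<omega>. \<omega> \<in> space M \<Longrightarrow> p s \<omega> \<in> {0..1}"
    and "\<And>s. alpha s \<in> borel_measurable M"
    and "\<And>s \<omega>. \<omega> \<in> space M \<Longrightarrow> alpha s \<omega> \<in> {0..1}"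
    and "\<And>s. s \<ge> 1 \<Longrightarrow> alpha s \<in> borel_measurable (filt M p alpha (s - 1))"
    and "\<And>s u. s \<ge> 1 \<Longrightarrow> theta s = 0 \<Longrightarrow> u \<in> {0..1} \<Longrightarrow>
           AE \<omega> in M. real_cond_exp M (filt M p alpha (s - 1))
                          (indicator {\<omega>'\<in>space M. p s \<omega>' \<le> u}) \<omega> \<le> u"
    and "t \<ge> 1"
    and "(\<integral>\<omega>. FDP_star_e p alpha theta t \<omega> \<partial>M) \<le> \<alpha>"
  shows "FDR M p alpha theta t \<le> \<alpha>"
proof -
  have finite_M: "finite_measure M"
    using assms(1) by (simp add: prob_space_def)
  have "FDR M p alpha theta t
      \<le> (\<Sum>j\<in>H0 theta t. \<integral>w. delta p alpha j w / (rej p alpha (j - 1) w + 1) \<partial>M)"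
    using finite_M assms(5,7) by (rule FDR_le_sum_integral_delta_div_rej)
  also have "\<dots> \<le> (\<Sum>j\<in>H0 theta t. \<integral>w. alpha j w / (rej p alpha (j - 1) w + 1) \<partial>M)"
  proof (rule sum_mono)
    fix j assume "j \<in> H0 theta t"
    then have "1 \<le> j" "theta j = 0"
      by (auto simp: H0_def)
    then show "(\<integral>w. delta p alpha j w / (rej p alpha (j - 1) w + 1) \<partial>M)
        \<le> (\<integral>w. alpha j w / (rej p alpha (j - 1) w + 1) \<partial>M)"
      using finite_M assms(5,7,8,9,10)
      by (intro integral_delta_div_rej_le_integral_alpha_div_rej) auto
  qed
  also have "\<dots> = (\<integral>w. FDP_star_e p alpha theta t w \<partial>M)"
    using finite_M assms(5,7,8) by (rule integral_FDP_star_e[symmetric])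
  also have "\<dots> \<le> \<alpha>"
    by (fact assms(12))
  finally show ?thesis .
qed

end
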